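(* Let $t,\Delta,\omega\ge 2$ be integers and write $\Delta=a(\omega-1)+b$ with integers $a\ge0$ and $0\le b<\omega-1$. Then \[ f_t(\Delta,\omega)\ \le\ \frac1t\,k_{t-1}\big(T(\Delta,\omega-1)\big)=\frac1t\sum_{k=0}^{b}\binom{b}{k}\binom{\omega-1-b}{t-1-k}(a+1)^k a^{t-1-k} \] (with the convention $0^0=1$).
   Context: $\mathcal{G}(\Delta,\omega)$ denotes the class of finite simple graphs $G$ with maximum degree $\Delta(G)\le\Delta$ and clique number $\omega(G)\le\omega$. $k_t(G)$ is the number of copies of $K_t$ in $G$ and $\rho_t(G)=k_t(G)/|V(G)|$. $f_t(\Delta,\omega)=\sup\{\rho_t(G): G\in\mathcal{G}(\Delta,\omega),\ |V(G)|\ge 1\}$. $T(n,r)$ denotes the $r$-partite Turán graph on $n$ vertices: the complete $r$-partite graph on $n$ vertices whose part sizes are all $\lfloor n/r\rfloor$ or $\lceil n/r\rceil$ (when $n<r$ this is $K_n$). *)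

theory Defs
  imports Complex_Main
begin

definition simple_graph :: "'a set \<Rightarrow> 'a set set \<Rightarrow> bool" where
  "simple_graph V E \<longleftrightarrow> finite V \<and> (\<forall>e\<in>E. e \<subseteq> V \<and> card e = 2)"

definition is_clique :: "'a set set \<Rightarrow> 'a set \<Rightarrow> bool" where
  "is_clique E S \<longleftrightarrow> (\<forall>u\<in>S. \<forall>v\<in>S. u \<noteq> v \<longrightarrow> {u, v} \<in> E)"

definition k_cliques :: "nat \<Rightarrow> 'a set \<Rightarrow> 'a set set \<Rightarrow> nat" where
  "k_cliques t V E = card {S. S \<subseteq> V \<and> card S = t \<and> is_clique E S}"

definition degree :: "'a set \<Rightarrow> 'a set set \<Rightarrow> 'a \<Rightarrow> nat" where
  "degree V E v = card {u \<in> V. {u, v} \<in> E}"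

definition in_class :: "nat \<Rightarrow> nat \<Rightarrow> 'a set \<Rightarrow> 'a set set \<Rightarrow> bool" where
  "in_class \<Delta> \<omega> V E \<longleftrightarrow> simple_graph V E
     \<and> (\<forall>v\<in>V. degree V E v \<le> \<Delta>)
     \<and> (\<forall>S. S \<subseteq> V \<and> is_clique E S \<longrightarrow> card S \<le> \<omega>)"

definition rho :: "nat \<Rightarrow> 'a set \<Rightarrow> 'a set set \<Rightarrow> real" where
  "rho t V E = real (k_cliques t V E) / real (card V)"

text \<open>f_t(Delta, omega): supremum over all finite simple graphs (up to isomorphism,
so vertex sets may be taken to be finite sets of naturals) with at least one vertex.\<close>
definition f_sup :: "nat \<Rightarrow> nat \<Rightarrow> nat \<Rightarrow> real" where
  "f_sup t \<Delta> \<omega> = Sup {rho t V E | (V :: nat set) (E :: nat set set).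
                          in_class \<Delta> \<omega> V E \<and> V \<noteq> {}}"

text \<open>Turan graph T(n, r) (r \<ge> 1): vertices 0..<n, vertex i in part (i mod r),
complete r-partite; part sizes are floor(n/r) or ceil(n/r); for n < r it is K_n.\<close>
definition turan_V :: "nat \<Rightarrow> nat set" where
  "turan_V n = {0..<n}"

definition turan_E :: "nat \<Rightarrow> nat \<Rightarrow> nat set set" where
  "turan_E n r = {{i, j} | i j. i < n \<and> j < n \<and> i mod r \<noteq> j mod r}"

end

theory Submission
  imports Defs "HOL-Library.FuncSet"
begin

text \<open>
  A \<open>t\<close>-clique through a vertex \<open>v\<close> is \<open>v\<close> together with a \<open>(t - 1)\<close>-clique of the
  neighbourhood of \<open>v\<close>, which has at most \<open>\<Delta>\<close> vertices and no \<open>\<omega>\<close>-clique. By Zykov's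
  theorem a graph on \<open>n\<close> vertices without \<open>(r + 1)\<close>-cliques has at most as many \<open>s\<close>-cliques
  as \<open>T(n, r)\<close>, so double counting gives \<open>t k\<^sub>t(G) \<le> |V(G)| k\<^sub>t\<^sub>-\<^sub>1(T(\<Delta>, \<omega> - 1))\<close>.

  A maximal \<open>K\<^sub>r\<^sub>+\<^sub>1\<close>-free supergraph on more
  than \<open>r\<close> vertices contains an \<open>r\<close>-clique \<open>K\<close>; an \<open>s\<close>-clique is a clique \<open>B\<close> outside \<open>K\<close>
  plus \<open>s - |B|\<close> common neighbours of \<open>B\<close> in \<open>K\<close>, of which there are at most \<open>r - |B|\<close>.
  In \<open>T(n, r)\<close>, with \<open>K\<close> taken to meet every part once, there are exactly \<open>r - |B|\<close>, so the
  same recursion holds with equality.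

  Vertex \<open>x\<close> of \<open>T(a r + b, r)\<close> lies in part \<open>x mod r\<close>, so \<open>b\<close> parts have \<open>a + 1\<close> vertices
  and \<open>r - b\<close> have \<open>a\<close>; a clique picks one vertex from each of the parts it meets, which gives
  the closed formula.
\<close>

section \<open>Counting subsets\<close>

lemma finite_subsets_with:
  "finite V \<Longrightarrow> finite {S. S \<subseteq> V \<and> P S}"
  by (rule finite_subset[of _ "Pow V"]) auto

lemma sum_subsets_by_card:
  fixes f :: "nat \<Rightarrow> nat"
  assumes "finite W"
  shows "(\<Sum>B | B \<subseteq> W \<and> card B \<le> s \<and> P B. f (card B))
       = (\<Sum>i\<le>s. f i * card {B. B \<subseteq> W \<and> card B = i \<and> P B})"
proof -
  let ?F = "{B. B \<subseteq> W \<and> card B \<le> s \<and> P B}"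
  have "(\<Sum>B\<in>?F. f (card B)) = (\<Sum>i\<le>s. \<Sum>B | B \<in> ?F \<and> card B = i. f (card B))"
    by (rule sum.group[symmetric]) (use assms finite_subsets_with in auto)
  also have "\<dots> = (\<Sum>i\<le>s. f i * card {B. B \<subseteq> W \<and> card B = i \<and> P B})"
  proof (rule sum.cong[OF refl])
    fix i assume "i \<in> {..s}"
    then have "{B. B \<in> ?F \<and> card B = i} = {B. B \<subseteq> W \<and> card B = i \<and> P B}" by auto
    then show "(\<Sum>B | B \<in> ?F \<and> card B = i. f (card B))
        = f i * card {B. B \<subseteq> W \<and> card B = i \<and> P B}" by simp
  qed
  finally show ?thesis .
qed

lemma sum_card_eq_sum_card_containing:
  assumes "finite V" and "finite \<C>" and "\<forall>S\<in>\<C>. S \<subseteq> V"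
  shows "(\<Sum>S\<in>\<C>. card S) = (\<Sum>v\<in>V. card {S \<in> \<C>. v \<in> S})"
proof -
  have "(\<Sum>S\<in>\<C>. card S) = (\<Sum>S\<in>\<C>. \<Sum>v | v \<in> V \<and> v \<in> S. 1)"
    using assms(3) by (intro sum.cong refl) (simp add: Int_absorb1 Collect_conj_eq)
  also have "\<dots> = (\<Sum>v\<in>V. \<Sum>S | S \<in> \<C> \<and> v \<in> S. 1)"
    by (rule sum.swap_restrict[OF assms(2,1)])
  finally show ?thesis by simp
qed

lemma card_subsets_meeting:
  assumes "finite U" and "P \<subseteq> U" and "k \<le> s"
  shows "card {R. R \<subseteq> U \<and> card R = s \<and> card (R \<inter> P) = k}
       = (card P choose k) * (card (U - P) choose (s - k))"
proof -
  let ?R = "{R. R \<subseteq> U \<and> card R = s \<and> card (R \<inter> P) = k}"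
  let ?A = "{A. A \<subseteq> P \<and> card A = k}" and ?B = "{B. B \<subseteq> U - P \<and> card B = s - k}"
  have fin: "finite P" "finite (U - P)" using assms(1,2) by (auto intro: finite_subset)
  have "bij_betw (\<lambda>R. (R \<inter> P, R - P)) ?R (?A \<times> ?B)"
  proof (rule bij_betw_byWitness[where f' = "\<lambda>(A, B). A \<union> B"])
    show "(\<lambda>R. (R \<inter> P, R - P)) ` ?R \<subseteq> ?A \<times> ?B"
    proof (rule image_subsetI)
      fix R assume "R \<in> ?R"
      then have R: "R \<subseteq> U" "card R = s" "card (R \<inter> P) = k" by auto
      have "card R = card (R \<inter> P) + card (R - P)"
        using R(1) assms(1) by (metis card_Int_Diff finite_subset)
      then show "(R \<inter> P, R - P) \<in> ?A \<times> ?B" using R by auto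
    qed
    show "(\<lambda>(A, B). A \<union> B) ` (?A \<times> ?B) \<subseteq> ?R"
    proof (rule image_subsetI)
      fix p assume "p \<in> ?A \<times> ?B"
      then obtain A B where AB: "p = (A, B)" "A \<subseteq> P" "card A = k" "B \<subseteq> U - P" "card B = s - k"
        by auto
      then have "finite A" "finite B" "A \<inter> B = {}" "(A \<union> B) \<inter> P = A"
        using fin assms(1) by (auto intro: finite_subset)
      then show "(\<lambda>(A, B). A \<union> B) p \<in> ?R"
        using AB assms(2,3) by (auto simp: card_Un_disjoint)
    qed
    show "\<forall>R\<in>?R. (\<lambda>(A, B). A \<union> B) (R \<inter> P, R - P) = R"
      by auto
    show "\<forall>p\<in>?A \<times> ?B. (\<lambda>R. (R \<inter> P, R - P)) ((\<lambda>(A, B). A \<union> B) p) = p"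
      by auto
  qed
  then have "card ?R = card ?A * card ?B"
    by (simp only: bij_betw_same_card card_cartesian_product)
  then show ?thesis by (simp add: n_subsets fin)
qed

lemma card_inj_on_subsets_onto:
  assumes "finite R"
  shows "card {S. S \<subseteq> X \<and> inj_on p S \<and> p ` S = R} = (\<Prod>c\<in>R. card {x \<in> X. p x = c})"
proof -
  define fibre where "fibre c = {x \<in> X. p x = c}" for c
  let ?G = "{S. S \<subseteq> X \<and> inj_on p S \<and> p ` S = R}"
  have "bij_betw (\<lambda>f. f ` R) (PiE R fibre) ?G"
  proof (rule bij_betw_byWitness[where f' = "\<lambda>S. restrict (the_inv_into S p) R"])
    show "\<forall>f\<in>PiE R fibre. restrict (the_inv_into (f ` R) p) R = f"
    proof
      fix f assume f: "f \<in> PiE R fibre"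
      then have pf: "\<And>c. c \<in> R \<Longrightarrow> p (f c) = c" by (auto simp: fibre_def)
      then have inj: "inj_on p (f ` R)" by (auto intro!: inj_onI)
      show "restrict (the_inv_into (f ` R) p) R = f"
      proof (rule extensionalityI)
        show "f \<in> extensional R" using f by (simp add: PiE_iff)
        fix c assume "c \<in> R"
        then show "restrict (the_inv_into (f ` R) p) R c = f c"
          using inj pf by (simp add: the_inv_into_f_eq)
      qed simp
    qed
    show "\<forall>S\<in>?G. (\<lambda>f. f ` R) (restrict (the_inv_into S p) R) = S"
      by (auto simp: the_inv_into_onto the_inv_into_f_f)
    show "(\<lambda>f. f ` R) ` PiE R fibre \<subseteq> ?G"
      by (force simp: fibre_def PiE_iff intro: inj_onI)
    show "(\<lambda>S. restrict (the_inv_into S p) R) ` ?G \<subseteq> PiE R fibre"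
      by (auto simp: fibre_def the_inv_into_into f_the_inv_into_f)
  qed
  then have "card ?G = card (PiE R fibre)"
    by (rule bij_betw_same_card[symmetric])
  then show ?thesis
    by (simp add: card_PiE assms fibre_def)
qed

lemma card_inj_on_subsets:
  assumes "finite X" and "finite Y" and "p ` X \<subseteq> Y"
  shows "card {S. S \<subseteq> X \<and> card S = s \<and> inj_on p S}
       = (\<Sum>R | R \<subseteq> Y \<and> card R = s. \<Prod>c\<in>R. card {x \<in> X. p x = c})"
proof -
  let ?\<R> = "{R. R \<subseteq> Y \<and> card R = s}"
  let ?G = "\<lambda>R. {S. S \<subseteq> X \<and> inj_on p S \<and> p ` S = R}"
  have "{S. S \<subseteq> X \<and> card S = s \<and> inj_on p S} = (\<Union>R\<in>?\<R>. ?G R)"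
    using assms(3) by (auto simp: card_image) (meson image_subset_iff subsetD)
  moreover have "card (\<Union>R\<in>?\<R>. ?G R) = (\<Sum>R\<in>?\<R>. card (?G R))"
  proof (rule card_UN_disjoint)
    show "finite ?\<R>" using assms(2) by (rule finite_subsets_with)
    show "\<forall>R\<in>?\<R>. finite (?G R)" using assms(1) by (simp add: finite_subsets_with)
  qed auto
  ultimately have "card {S. S \<subseteq> X \<and> card S = s \<and> inj_on p S} = (\<Sum>R\<in>?\<R>. card (?G R))"
    by simp
  also have "\<dots> = (\<Sum>R\<in>?\<R>. \<Prod>c\<in>R. card {x \<in> X. p x = c})"
  proof (rule sum.cong[OF refl])
    fix R assume "R \<in> ?\<R>"
    then have "finite R" using rev_finite_subset[OF assms(2)] by simp
    then show "card (?G R) = (\<Prod>c\<in>R. card {x \<in> X. p x = c})"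
      by (rule card_inj_on_subsets_onto)
  qed
  finally show ?thesis .
qed

section \<open>Cliques\<close>

definition clique_number_le :: "'a set \<Rightarrow> 'a set set \<Rightarrow> nat \<Rightarrow> bool" where
  "clique_number_le V E r \<longleftrightarrow> (\<forall>S. S \<subseteq> V \<and> is_clique E S \<longrightarrow> card S \<le> r)"

definition common_neighbours :: "'a set set \<Rightarrow> 'a set \<Rightarrow> 'a set \<Rightarrow> 'a set" where
  "common_neighbours E K B = {x \<in> K. \<forall>y\<in>B. {x, y} \<in> E}"

lemma is_clique_subset: "is_clique E S \<Longrightarrow> T \<subseteq> S \<Longrightarrow> is_clique E T"
  unfolding is_clique_def by blast

lemma is_clique_Un_common_neighbours:
  assumes "is_clique E B" and "is_clique E K"
  shows "is_clique E (B \<union> common_neighbours E K B)"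
  using assms unfolding is_clique_def common_neighbours_def
  by (auto simp: subset_iff) (metis insert_commute)

lemma clique_number_le_subset:
  "clique_number_le V E r \<Longrightarrow> W \<subseteq> V \<Longrightarrow> clique_number_le W E r"
  unfolding clique_number_le_def by blast

lemma clique_number_le_antimono:
  "clique_number_le V E' r \<Longrightarrow> E \<subseteq> E' \<Longrightarrow> clique_number_le V E r"
  unfolding clique_number_le_def is_clique_def by blast

lemma clique_number_le_0:
  assumes "clique_number_le V E 0"
  shows "V = {}"
proof -
  have "\<not> {v} \<subseteq> V" for v
    using assms[unfolded clique_number_le_def, rule_format, of "{v}"] by (auto simp: is_clique_def)
  then show ?thesis by blast
qed

lemma k_cliques_le_binomial:
  assumes "finite V"
  shows "k_cliques s V E \<le> card V choose s"
proof -
  have "k_cliques s V E \<le> card {S. S \<subseteq> V \<and> card S = s}"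
    unfolding k_cliques_def using assms by (intro card_mono finite_subsets_with) auto
  then show ?thesis by (simp add: n_subsets assms)
qed

lemma k_cliques_mono_edges:
  assumes "finite V" and "E \<inter> Pow V \<subseteq> E'"
  shows "k_cliques s V E \<le> k_cliques s V E'"
  unfolding k_cliques_def using assms
  by (intro card_mono finite_subsets_with) (auto simp: is_clique_def)

lemma bij_betw_split_clique:
  assumes "finite V" and "K \<subseteq> V" and "is_clique E K"
  shows "bij_betw (\<lambda>S. (S - K, S \<inter> K)) {S. S \<subseteq> V \<and> card S = s \<and> is_clique E S}
           (SIGMA B:{B. B \<subseteq> V - K \<and> card B \<le> s \<and> is_clique E B}.
              {A. A \<subseteq> common_neighbours E K B \<and> card A = s - card B})"
proof (rule bij_betw_byWitness[where f' = "\<lambda>(B, A). B \<union> A"])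
  let ?\<B> = "{B. B \<subseteq> V - K \<and> card B \<le> s \<and> is_clique E B}"
  let ?A = "\<lambda>B. {A. A \<subseteq> common_neighbours E K B \<and> card A = s - card B}"
  let ?C = "{S. S \<subseteq> V \<and> card S = s \<and> is_clique E S}"
  show "\<forall>S\<in>?C. (\<lambda>(B, A). B \<union> A) (S - K, S \<inter> K) = S" by auto
  show "\<forall>p\<in>(SIGMA B:?\<B>. ?A B). (\<lambda>S. (S - K, S \<inter> K)) ((\<lambda>(B, A). B \<union> A) p) = p"
    by (auto simp: common_neighbours_def)
  show "(\<lambda>S. (S - K, S \<inter> K)) ` ?C \<subseteq> (SIGMA B:?\<B>. ?A B)"
  proof (rule image_subsetI)
    fix S assume "S \<in> ?C"
    then have S: "S \<subseteq> V" "is_clique E S" "card S = s" by auto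
    have "finite S" using S(1) assms(1) finite_subset by auto
    then have "card (S - K) \<le> card S" "card (S \<inter> K) = card S - card (S - K)"
      by (auto intro: card_mono) (metis card_Int_Diff add_diff_cancel_right' Int_commute)
    moreover have "is_clique E (S - K)" using S(2) by (rule is_clique_subset) auto
    moreover have "S \<inter> K \<subseteq> common_neighbours E K (S - K)"
      using S(2) by (auto simp: common_neighbours_def is_clique_def)
    ultimately show "(S - K, S \<inter> K) \<in> (SIGMA B:?\<B>. ?A B)"
      using S by auto
  qed
  show "(\<lambda>(B, A). B \<union> A) ` (SIGMA B:?\<B>. ?A B) \<subseteq> ?C"
  proof clarify
    fix B A assume B: "B \<subseteq> V - K" "is_clique E B" and A: "A \<subseteq> common_neighbours E K B"
      and cards: "card B \<le> s" "card A = s - card B"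
    have "A \<subseteq> K" using A by (auto simp: common_neighbours_def)
    then have "finite B" "finite A" "B \<inter> A = {}"
      using B(1) assms(1,2) by (auto intro: finite_subset)
    then have "card (B \<union> A) = s" using cards by (simp add: card_Un_disjoint)
    moreover have "is_clique E (B \<union> A)"
      by (rule is_clique_subset[OF is_clique_Un_common_neighbours[OF B(2) assms(3)]]) (use A in auto)
    ultimately show "B \<union> A \<subseteq> V \<and> card (B \<union> A) = s \<and> is_clique E (B \<union> A)"
      using B(1) \<open>A \<subseteq> K\<close> assms(2) by auto
  qed
qed

lemma k_cliques_split_clique:
  assumes "finite V" and "K \<subseteq> V" and "is_clique E K"
  shows "k_cliques s V E
       = (\<Sum>B | B \<subseteq> V - K \<and> card B \<le> s \<and> is_clique E B.
            card (common_neighbours E K B) choose (s - card B))"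
proof -
  let ?\<B> = "{B. B \<subseteq> V - K \<and> card B \<le> s \<and> is_clique E B}"
  let ?A = "\<lambda>B. {A. A \<subseteq> common_neighbours E K B \<and> card A = s - card B}"
  have fin_nbrs: "finite (common_neighbours E K B)" for B
    using assms(1,2) by (auto simp: common_neighbours_def intro: finite_subset)
  have "k_cliques s V E = card (SIGMA B:?\<B>. ?A B)"
    unfolding k_cliques_def using bij_betw_split_clique[OF assms] by (rule bij_betw_same_card)
  also have "\<dots> = (\<Sum>B\<in>?\<B>. card (?A B))"
    by (rule card_SigmaI) (use assms(1) fin_nbrs finite_subsets_with in auto)
  also have "\<dots> = (\<Sum>B\<in>?\<B>. card (common_neighbours E K B) choose (s - card B))"
    by (simp add: n_subsets fin_nbrs)
  finally show ?thesis .
qed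

lemma k_cliques_le_peel:
  assumes "finite V" and "K \<subseteq> V" and "is_clique E K" and "card K = r"
    and "clique_number_le V E r"
  shows "k_cliques s V E \<le> (\<Sum>i\<le>s. (r - i choose (s - i)) * k_cliques i (V - K) E)"
proof -
  have card_nbrs: "card (common_neighbours E K B) \<le> r - card B"
    if "B \<subseteq> V - K" and "is_clique E B" for B
  proof -
    let ?N = "common_neighbours E K B"
    have "?N \<subseteq> K" by (auto simp: common_neighbours_def)
    then have "finite B" "finite ?N" "B \<inter> ?N = {}" "B \<union> ?N \<subseteq> V"
      using that(1) assms(1,2) by (auto intro: finite_subset)
    moreover have "is_clique E (B \<union> ?N)"
      by (rule is_clique_Un_common_neighbours[OF that(2) assms(3)])
    ultimately have "card B + card ?N \<le> r"
      using assms(5) by (auto simp: clique_number_le_def card_Un_disjoint[symmetric])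
    then show ?thesis by simp
  qed
  have "k_cliques s V E \<le> (\<Sum>B | B \<subseteq> V - K \<and> card B \<le> s \<and> is_clique E B. (r - card B) choose (s - card B))"
    unfolding k_cliques_split_clique[OF assms(1-3)]
    by (intro sum_mono binomial_right_mono card_nbrs) auto
  also have "\<dots> = (\<Sum>i\<le>s. (r - i choose (s - i)) * card {B. B \<subseteq> V - K \<and> card B = i \<and> is_clique E B})"
    by (rule sum_subsets_by_card) (simp add: assms(1))
  finally show ?thesis by (simp add: k_cliques_def)
qed

lemma saturate_to_clique:
  assumes "finite V" and "clique_number_le V E r" and "r < card V"
  obtains E' K where "E \<inter> Pow V \<subseteq> E'" and "clique_number_le V E' r"
    and "K \<subseteq> V" and "card K = r" and "is_clique E' K"
proof -
  let ?F = "{E'. E' \<subseteq> Pow V \<and> clique_number_le V E' r}"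
  have "clique_number_le V (E \<inter> Pow V) r"
    by (rule clique_number_le_antimono[OF assms(2)]) simp
  then have E_in: "E \<inter> Pow V \<in> ?F" by simp
  have fin: "finite ?F"
    by (rule finite_subset[of _ "Pow (Pow V)"]) (use assms(1) in auto)
  obtain E' where "E' \<in> ?F" and E': "E \<inter> Pow V \<subseteq> E'"
    and maximal: "\<forall>E''\<in>?F. E' \<subseteq> E'' \<longrightarrow> E' = E''"
    using finite_has_maximal2[OF fin E_in] by blast
  then have E'_V: "E' \<subseteq> Pow V" and E'_free: "clique_number_le V E' r" by auto
  have "\<not> is_clique E' V"
    using E'_free assms(3) by (auto simp: clique_number_le_def)
  then obtain u v where uv: "u \<in> V" "v \<in> V" "u \<noteq> v" "{u, v} \<notin> E'"
    unfolding is_clique_def by blast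
  \<comment> \<open>By maximality the missing edge \<open>{u, v}\<close> completes an \<open>(r + 1)\<close>-clique \<open>S\<close>;
    removing \<open>v\<close> from it leaves a clique of \<open>E'\<close> with at least \<open>r\<close> vertices.\<close>
  let ?E'' = "insert {u, v} E'"
  have "?E'' \<subseteq> Pow V" using E'_V uv by auto
  moreover have "?E'' \<noteq> E'" using uv(4) by auto
  ultimately have "\<not> clique_number_le V ?E'' r"
    using maximal[rule_format, of ?E''] by auto
  then obtain S where S: "S \<subseteq> V" "is_clique ?E'' S" "r < card S"
    unfolding clique_number_le_def by (auto simp: not_le)
  have "u \<in> S \<and> v \<in> S"
  proof (rule ccontr)
    assume "\<not> (u \<in> S \<and> v \<in> S)"
    then have "is_clique E' S"
      using S(2) unfolding is_clique_def by (auto simp: doubleton_eq_iff)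
    then show False using E'_free S(1,3) by (auto simp: clique_number_le_def not_le)
  qed
  then have "is_clique E' (S - {v})" "r \<le> card (S - {v})"
    using S uv(3) finite_subset[OF S(1) assms(1)]
    by (auto simp: is_clique_def doubleton_eq_iff)
  then obtain K where "K \<subseteq> S - {v}" "card K = r" "is_clique E' K"
    by (meson is_clique_subset obtain_subset_with_card_n)
  then show ?thesis
    using that[of E' K] E' E'_free S(1) by auto
qed

section \<open>Turan graphs\<close>

lemma turan_E_iff:
  assumes "u \<noteq> v"
  shows "{u, v} \<in> turan_E n r \<longleftrightarrow> u < n \<and> v < n \<and> u mod r \<noteq> v mod r"
  using assms unfolding turan_E_def by (auto simp: doubleton_eq_iff)

lemma is_clique_turan_iff:
  "S \<subseteq> {0..<n} \<Longrightarrow> is_clique (turan_E n r) S \<longleftrightarrow> inj_on (\<lambda>x. x mod r) S"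
  unfolding is_clique_def inj_on_def by (auto simp: turan_E_iff subset_iff)

lemma finite_turan_V: "finite (turan_V n)"
  by (simp add: turan_V_def)

lemma k_cliques_turan:
  "k_cliques s (turan_V n) (turan_E n r)
     = card {S. S \<subseteq> {0..<n} \<and> card S = s \<and> inj_on (\<lambda>x. x mod r) S}"
  unfolding k_cliques_def turan_V_def
  by (rule arg_cong[where f = card]) (auto simp: is_clique_turan_iff)

lemma k_cliques_turan_complete:
  assumes "n \<le> r"
  shows "k_cliques s (turan_V n) (turan_E n r) = n choose s"
proof -
  have "inj_on (\<lambda>x. x mod r) S" if "S \<subseteq> {0..<n}" for S
  proof (rule inj_onI)
    fix x y assume "x \<in> S" "y \<in> S" "x mod r = y mod r"
    moreover have "x < r" "y < r" using calculation(1,2) that assms by auto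
    ultimately show "x = y" by simp
  qed
  then have "{S. S \<subseteq> {0..<n} \<and> card S = s \<and> inj_on (\<lambda>x. x mod r) S}
      = {S. S \<subseteq> {0..<n} \<and> card S = s}" by blast
  then show ?thesis by (simp add: k_cliques_turan n_subsets)
qed

lemma k_cliques_turan_mono:
  assumes "m \<le> n"
  shows "k_cliques s (turan_V m) (turan_E m r) \<le> k_cliques s (turan_V n) (turan_E n r)"
  unfolding k_cliques_turan using assms
  by (intro card_mono finite_subsets_with) auto

lemma inj_on_mod_interval: "inj_on (\<lambda>x::nat. x mod r) {m..<m + r}"
proof (rule inj_onI)
  fix x y assume x: "x \<in> {m..<m + r}" and y: "y \<in> {m..<m + r}" and eq: "x mod r = y mod r"
  show "x = y"
  proof (cases "x \<le> y")
    case True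
    with eq obtain q where "y = x + r * q" by (elim mod_eq_nat2E)
    with x y show ?thesis by (cases q) auto
  next
    case False
    with eq obtain q where "x = y + r * q" by (elim mod_eq_nat1E) simp
    with x y show ?thesis by (cases q) auto
  qed
qed

lemma card_common_neighbours_turan:
  assumes "0 < r" and "r \<le> n" and "B \<subseteq> {0..<n - r}" and "inj_on (\<lambda>x. x mod r) B"
  shows "card (common_neighbours (turan_E n r) {n - r..<n} B) = r - card B"
proof -
  let ?p = "\<lambda>x::nat. x mod r"
  define K where "K = {n - r..<n}"
  let ?N = "common_neighbours (turan_E n r) K B"
  have inj_K: "inj_on ?p K"
    using inj_on_mod_interval[of r "n - r"] assms(2) by (simp add: K_def)
  have image_K: "?p ` K = {0..<r}"
  proof (rule card_subset_eq)
    show "?p ` K \<subseteq> {0..<r}" using assms(1) by auto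
    show "card (?p ` K) = card {0..<r}" using card_image[OF inj_K] assms(2) by (simp add: K_def)
  qed simp
  have "x \<noteq> y \<and> x < n \<and> y < n" if "x \<in> K" "y \<in> B" for x y
    using that assms(3) by (auto simp: K_def)
  then have "?N = {x \<in> K. ?p x \<notin> ?p ` B}"
    by (auto simp: common_neighbours_def turan_E_iff)
  then have "?p ` ?N = {0..<r} - ?p ` B"
    using image_K by auto
  moreover have "inj_on ?p ?N"
    by (rule inj_on_subset[OF inj_K]) (auto simp: common_neighbours_def)
  ultimately have "card ?N = card ({0..<r} - ?p ` B)"
    by (metis card_image)
  also have "\<dots> = r - card B"
    using assms(1,3) card_image[OF assms(4)] finite_subset[OF assms(3)]
    by (subst card_Diff_subset) auto
  finally show ?thesis unfolding K_def .
qed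

lemma k_cliques_turan_peel:
  assumes "0 < r" and "r \<le> n"
  shows "k_cliques s (turan_V n) (turan_E n r)
       = (\<Sum>i\<le>s. (r - i choose (s - i)) * k_cliques i (turan_V (n - r)) (turan_E (n - r) r))"
proof -
  let ?p = "\<lambda>x::nat. x mod r"
  let ?E = "turan_E n r"
  let ?K = "{n - r..<n}"
  have V_minus_K: "turan_V n - ?K = {0..<n - r}"
    by (auto simp: turan_V_def)
  have cliques_outside: "is_clique ?E B \<longleftrightarrow> inj_on ?p B" if "B \<subseteq> {0..<n - r}" for B
    using that by (intro is_clique_turan_iff) auto
  have K: "?K \<subseteq> turan_V n" "is_clique ?E ?K"
    using inj_on_mod_interval[of r "n - r"] assms(2) is_clique_turan_iff[of ?K n r]
    by (auto simp: turan_V_def)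
  have "k_cliques s (turan_V n) ?E
      = (\<Sum>B | B \<subseteq> turan_V n - ?K \<and> card B \<le> s \<and> is_clique ?E B. (r - card B) choose (s - card B))"
    unfolding k_cliques_split_clique[OF finite_turan_V K] V_minus_K
    using assms cliques_outside by (intro sum.cong) (auto simp: card_common_neighbours_turan)
  also have "\<dots> = (\<Sum>i\<le>s. (r - i choose (s - i)) * card {B. B \<subseteq> {0..<n - r} \<and> card B = i \<and> is_clique ?E B})"
    unfolding V_minus_K by (rule sum_subsets_by_card) simp
  also have "\<dots> = (\<Sum>i\<le>s. (r - i choose (s - i)) * k_cliques i (turan_V (n - r)) (turan_E (n - r) r))"
  proof -
    have "{B. B \<subseteq> {0..<n - r} \<and> card B = i \<and> is_clique ?E B}
        = {B. B \<subseteq> {0..<n - r} \<and> card B = i \<and> inj_on ?p B}" for i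
      using cliques_outside by blast
    then show ?thesis unfolding k_cliques_turan by simp
  qed
  finally show ?thesis .
qed

lemma card_residue_class:
  fixes a b r c :: nat
  assumes "b < r" and "c < r"
  shows "card {x \<in> {0..<a * r + b}. x mod r = c} = (if c < b then a + 1 else a)"
proof -
  define m where "m = (if c < b then a + 1 else a)"
  have "{x \<in> {0..<a * r + b}. x mod r = c} = (\<lambda>q. q * r + c) ` {..<m}"
  proof (intro equalityI subsetI)
    fix x assume "x \<in> {x \<in> {0..<a * r + b}. x mod r = c}"
    then have x: "x < a * r + b" "x = x div r * r + c"
      using div_mult_mod_eq[of x r] by auto
    have "x div r * r < m * r"
    proof (cases "c < b")
      case True
      have "(a + 1) * r = a * r + r" by simp
      then show ?thesis unfolding m_def if_P[OF True] using x assms(1) True by linarith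
    next
      case False
      then show ?thesis unfolding m_def if_not_P[OF False] using x by linarith
    qed
    then have "x div r < m" by simp
    with x(2) show "x \<in> (\<lambda>q. q * r + c) ` {..<m}" by blast
  next
    fix x assume "x \<in> (\<lambda>q. q * r + c) ` {..<m}"
    then obtain q where q: "q < m" "x = q * r + c" by auto
    then have "q * r + c < a * r + b"
    proof (cases "c < b")
      case True
      then have "q * r \<le> a * r" using q(1) by (simp add: m_def)
      then show ?thesis using True by linarith
    next
      case False
      then have "Suc q * r \<le> a * r" using q(1) by (intro mult_le_mono1) (simp add: m_def)
      then show ?thesis using assms(2) by simp
    qed
    then show "x \<in> {x \<in> {0..<a * r + b}. x mod r = c}"
      using q(2) assms(2) by simp
  qed
  moreover have "inj_on (\<lambda>q. q * r + c) {..<m}"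
    using assms by (auto simp: inj_on_def)
  ultimately show ?thesis by (simp add: card_image m_def)
qed

lemma prod_card_residue_classes:
  assumes "b < r" and "R \<subseteq> {0..<r}"
  shows "(\<Prod>c\<in>R. card {x \<in> {0..<a * r + b}. x mod r = c})
       = (a + 1) ^ card (R \<inter> {0..<b}) * a ^ (card R - card (R \<inter> {0..<b}))"
proof -
  have "finite R" using assms(2) by (rule finite_subset) simp
  have "(\<Prod>c\<in>R. card {x \<in> {0..<a * r + b}. x mod r = c}) = (\<Prod>c\<in>R. if c < b then a + 1 else a)"
    using assms by (intro prod.cong refl card_residue_class) auto
  also have "\<dots> = (a + 1) ^ card (R \<inter> {0..<b}) * a ^ card (R \<inter> - {c. c < b})"
    by (simp add: prod.If_cases \<open>finite R\<close> atLeast0LessThan lessThan_def)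
  moreover have "R \<inter> - {c. c < b} = R - {0..<b}" by auto
  ultimately show ?thesis by (simp add: card_Diff_subset_Int \<open>finite R\<close>)
qed

lemma k_cliques_turan_formula:
  assumes "b < r"
  shows "k_cliques s (turan_V (a * r + b)) (turan_E (a * r + b) r)
       = (\<Sum>k = 0..b. if k \<le> s then (b choose k) * ((r - b) choose (s - k)) * (a + 1) ^ k * a ^ (s - k)
                       else 0)"
proof -
  let ?\<R> = "{R. R \<subseteq> {0..<r} \<and> card R = s}"
  let ?k = "\<lambda>R. card (R \<inter> {0..<b})"
  have fin_\<R>: "finite ?\<R>" by (simp add: finite_subsets_with)
  have "k_cliques s (turan_V (a * r + b)) (turan_E (a * r + b) r)
      = (\<Sum>R\<in>?\<R>. \<Prod>c\<in>R. card {x \<in> {0..<a * r + b}. x mod r = c})"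
    unfolding k_cliques_turan using assms by (intro card_inj_on_subsets) auto
  also have "\<dots> = (\<Sum>R\<in>?\<R>. (a + 1) ^ ?k R * a ^ (s - ?k R))"
    using prod_card_residue_classes[OF assms] by (intro sum.cong refl) auto
  also have "\<dots> = (\<Sum>k = 0..b. \<Sum>R | R \<in> ?\<R> \<and> ?k R = k. (a + 1) ^ ?k R * a ^ (s - ?k R))"
  proof (rule sum.group[symmetric, OF fin_\<R>])
    show "?k ` ?\<R> \<subseteq> {0..b}"
      using card_mono[of "{0..<b}"] by fastforce
  qed simp
  also have "\<dots> = (\<Sum>k = 0..b. if k \<le> s then (b choose k) * ((r - b) choose (s - k)) * (a + 1) ^ k * a ^ (s - k)
                       else 0)"
  proof (rule sum.cong[OF refl])
    fix k
    have "(\<Sum>R | R \<in> ?\<R> \<and> ?k R = k. (a + 1) ^ ?k R * a ^ (s - ?k R))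
        = card {R. R \<subseteq> {0..<r} \<and> card R = s \<and> ?k R = k} * ((a + 1) ^ k * a ^ (s - k))"
      by simp
    moreover have "{R. R \<subseteq> {0..<r} \<and> card R = s \<and> ?k R = k} = {}" if "\<not> k \<le> s"
    proof -
      have "?k R \<le> s" if "R \<subseteq> {0..<r}" "card R = s" for R
        using that card_mono[of R "R \<inter> {0..<b}"] finite_subset[OF that(1)] by auto
      with \<open>\<not> k \<le> s\<close> show ?thesis by auto
    qed
    moreover have "card {R. R \<subseteq> {0..<r} \<and> card R = s \<and> ?k R = k} = (b choose k) * ((r - b) choose (s - k))"
      if "k \<le> s"
      using card_subsets_meeting[of "{0..<r}" "{0..<b}" k s] that assms by simp
    ultimately show "(\<Sum>R | R \<in> ?\<R> \<and> ?k R = k. (a + 1) ^ ?k R * a ^ (s - ?k R))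
        = (if k \<le> s then (b choose k) * ((r - b) choose (s - k)) * (a + 1) ^ k * a ^ (s - k) else 0)"
      by (auto simp: mult.assoc)
  qed
  finally show ?thesis .
qed

section \<open>Zykov's theorem\<close>

lemma k_cliques_le_turan:
  assumes "finite V" and "clique_number_le V E r"
  shows "k_cliques s V E \<le> k_cliques s (turan_V (card V)) (turan_E (card V) r)"
  using assms
proof (induction "card V" arbitrary: V E s rule: less_induct)
  case less
  show ?case
  proof (cases "card V \<le> r")
    case True
    then show ?thesis
      using k_cliques_le_binomial[OF less.prems(1)] by (simp only: k_cliques_turan_complete)
  next
    case False
    then have "r < card V" by simp
    then obtain E' K where E': "E \<inter> Pow V \<subseteq> E'" "clique_number_le V E' r"
      and K: "K \<subseteq> V" "card K = r" "is_clique E' K"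
      by (rule saturate_to_clique[OF less.prems])
    have "0 < r"
      using clique_number_le_0[of V E] less.prems(2) \<open>r < card V\<close> by (cases r) auto
    have card_V_K: "card (V - K) = card V - r"
      using K less.prems(1) by (simp add: card_Diff_subset finite_subset)
    have "k_cliques s V E \<le> k_cliques s V E'"
      by (rule k_cliques_mono_edges[OF less.prems(1) E'(1)])
    also have "\<dots> \<le> (\<Sum>i\<le>s. (r - i choose (s - i)) * k_cliques i (V - K) E')"
      by (rule k_cliques_le_peel[OF less.prems(1) K(1,3,2) E'(2)])
    also have "\<dots> \<le> (\<Sum>i\<le>s. (r - i choose (s - i))
                      * k_cliques i (turan_V (card V - r)) (turan_E (card V - r) r))"
    proof (intro sum_mono mult_left_mono)
      fix i
      show "k_cliques i (V - K) E' \<le> k_cliques i (turan_V (card V - r)) (turan_E (card V - r) r)"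
        using less.hyps[of "V - K" E' i] \<open>0 < r\<close> \<open>r < card V\<close> card_V_K less.prems(1)
          clique_number_le_subset[OF E'(2)] by auto
    qed simp
    also have "\<dots> = k_cliques s (turan_V (card V)) (turan_E (card V) r)"
      using \<open>0 < r\<close> False by (simp add: k_cliques_turan_peel)
    finally show ?thesis .
  qed
qed

section \<open>Cliques through a vertex\<close>

lemma card_cliques_containing_le:
  assumes "finite V"
  shows "card {S. S \<subseteq> V \<and> card S = s \<and> is_clique E S \<and> v \<in> S}
     \<le> k_cliques (s - 1) {u \<in> V. {u, v} \<in> E} E"
proof -
  let ?N = "{u \<in> V. {u, v} \<in> E}"
  let ?C = "{S. S \<subseteq> V \<and> card S = s \<and> is_clique E S \<and> v \<in> S}"
  have inj: "inj_on (\<lambda>S. S - {v}) ?C"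
    by (rule inj_onI) (metis insert_Diff mem_Collect_eq)
  have image: "(\<lambda>S. S - {v}) ` ?C \<subseteq> {S. S \<subseteq> ?N \<and> card S = s - 1 \<and> is_clique E S}"
  proof (rule image_subsetI)
    fix S assume "S \<in> ?C"
    then have S: "S \<subseteq> V" "card S = s" "is_clique E S" "v \<in> S" by auto
    then have "S - {v} \<subseteq> ?N" unfolding is_clique_def by blast
    moreover have "card (S - {v}) = s - 1" using S(2,4) by simp
    moreover have "is_clique E (S - {v})" using S(3) by (rule is_clique_subset) auto
    ultimately show "S - {v} \<in> {S. S \<subseteq> ?N \<and> card S = s - 1 \<and> is_clique E S}" by simp
  qed
  have "finite {S. S \<subseteq> ?N \<and> card S = s - 1 \<and> is_clique E S}"
    using assms by (simp add: finite_subsets_with)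
  from card_mono[OF this image] show ?thesis
    unfolding k_cliques_def card_image[OF inj] .
qed

lemma clique_number_le_neighbourhood:
  assumes "clique_number_le V E \<omega>" and "v \<in> V" and "{v} \<notin> E" and "finite V"
  shows "clique_number_le {u \<in> V. {u, v} \<in> E} E (\<omega> - 1)"
  unfolding clique_number_le_def
proof (intro allI impI)
  fix S assume S: "S \<subseteq> {u \<in> V. {u, v} \<in> E} \<and> is_clique E S"
  then have "v \<notin> S" using assms(3) by auto
  have "insert v S \<subseteq> V" using S assms(2) by auto
  moreover have "is_clique E (insert v S)"
    using S unfolding is_clique_def by (auto simp: subset_iff) (metis insert_commute)
  ultimately have "card (insert v S) \<le> \<omega>"
    using assms(1) by (auto simp: clique_number_le_def)
  moreover have "finite S" using S assms(4) by (auto intro: finite_subset)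
  ultimately show "card S \<le> \<omega> - 1" using \<open>v \<notin> S\<close> by simp
qed

lemma mult_k_cliques_le_turan:
  assumes "in_class \<Delta> \<omega> V E"
  shows "t * k_cliques t V E \<le> card V * k_cliques (t - 1) (turan_V \<Delta>) (turan_E \<Delta> (\<omega> - 1))"
proof -
  let ?C = "{S. S \<subseteq> V \<and> card S = t \<and> is_clique E S}"
  let ?N = "\<lambda>v. {u \<in> V. {u, v} \<in> E}"
  have fin: "finite V" and edges: "\<forall>e\<in>E. card e = 2"
    and deg: "\<forall>v\<in>V. card (?N v) \<le> \<Delta>" and free: "clique_number_le V E \<omega>"
    using assms by (auto simp: in_class_def simple_graph_def degree_def clique_number_le_def)
  have "t * k_cliques t V E = (\<Sum>S\<in>?C. card S)"
    by (simp add: k_cliques_def)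
  also have "\<dots> = (\<Sum>v\<in>V. card {S \<in> ?C. v \<in> S})"
    using fin by (intro sum_card_eq_sum_card_containing finite_subsets_with) auto
  also have "\<dots> \<le> (\<Sum>v\<in>V. k_cliques (t - 1) (turan_V \<Delta>) (turan_E \<Delta> (\<omega> - 1)))"
  proof (rule sum_mono)
    fix v assume v: "v \<in> V"
    have "{v} \<notin> E" using edges by fastforce
    have "card {S \<in> ?C. v \<in> S} \<le> k_cliques (t - 1) (?N v) E"
      using card_cliques_containing_le[OF fin] by (simp add: conj_assoc)
    also have "\<dots> \<le> k_cliques (t - 1) (turan_V (card (?N v))) (turan_E (card (?N v)) (\<omega> - 1))"
      by (rule k_cliques_le_turan)
        (use fin clique_number_le_neighbourhood[OF free v \<open>{v} \<notin> E\<close> fin] in auto)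
    also have "\<dots> \<le> k_cliques (t - 1) (turan_V \<Delta>) (turan_E \<Delta> (\<omega> - 1))"
      using deg v by (intro k_cliques_turan_mono) auto
    finally show "card {S \<in> ?C. v \<in> S} \<le> k_cliques (t - 1) (turan_V \<Delta>) (turan_E \<Delta> (\<omega> - 1))" .
  qed
  also have "\<dots> = card V * k_cliques (t - 1) (turan_V \<Delta>) (turan_E \<Delta> (\<omega> - 1))"
    by simp
  finally show ?thesis .
qed

lemma rho_le_turan:
  assumes "in_class \<Delta> \<omega> V E" and "V \<noteq> {}" and "0 < t"
  shows "rho t V E \<le> 1 / real t * real (k_cliques (t - 1) (turan_V \<Delta>) (turan_E \<Delta> (\<omega> - 1)))"
proof -
  have "0 < card V"
    using assms(1,2) by (auto simp: in_class_def simple_graph_def card_gt_0_iff)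
  moreover have "real t * real (k_cliques t V E)
      \<le> real (card V) * real (k_cliques (t - 1) (turan_V \<Delta>) (turan_E \<Delta> (\<omega> - 1)))"
    using mult_k_cliques_le_turan[OF assms(1), of t] by (simp flip: of_nat_mult)
  ultimately show ?thesis
    using assms(3) by (simp add: rho_def divide_simps mult.commute)
qed

theorem mainTheorem4:
  fixes t \<Delta> \<omega> a b :: nat
  assumes "t \<ge> 2" and "\<Delta> \<ge> 2" and "\<omega> \<ge> 2"
    and "\<Delta> = a * (\<omega> - 1) + b" and "b < \<omega> - 1"
  shows "f_sup t \<Delta> \<omega>
           \<le> (1 / real t) * real (k_cliques (t - 1) (turan_V \<Delta>) (turan_E \<Delta> (\<omega> - 1)))
       \<and> (1 / real t) * real (k_cliques (t - 1) (turan_V \<Delta>) (turan_E \<Delta> (\<omega> - 1)))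
           = (1 / real t) * (\<Sum>k = 0..b. if k \<le> t - 1 then
                 real (b choose k) * real ((\<omega> - 1 - b) choose (t - 1 - k))
                 * real (a + 1) ^ k * real a ^ (t - 1 - k)
               else 0)"
proof
  have singleton: "in_class \<Delta> \<omega> {0::nat} {}"
    using assms(3) by (auto simp: in_class_def simple_graph_def degree_def subset_singleton_iff)
  show "f_sup t \<Delta> \<omega> \<le> (1 / real t) * real (k_cliques (t - 1) (turan_V \<Delta>) (turan_E \<Delta> (\<omega> - 1)))"
    unfolding f_sup_def
  proof (rule cSup_least)
    fix x assume "x \<in> {rho t V E |(V :: nat set) E. in_class \<Delta> \<omega> V E \<and> V \<noteq> {}}"
    then obtain V :: "nat set" and E where "x = rho t V E" "in_class \<Delta> \<omega> V E" "V \<noteq> {}"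
      by blast
    then show "x \<le> (1 / real t) * real (k_cliques (t - 1) (turan_V \<Delta>) (turan_E \<Delta> (\<omega> - 1)))"
      using rho_le_turan[of \<Delta> \<omega> V E t] assms(1) by simp
  qed (use singleton in blast)
next
  have "real (k_cliques (t - 1) (turan_V \<Delta>) (turan_E \<Delta> (\<omega> - 1)))
      = (\<Sum>k = 0..b. if k \<le> t - 1 then
           real (b choose k) * real ((\<omega> - 1 - b) choose (t - 1 - k))
           * real (a + 1) ^ k * real a ^ (t - 1 - k)
         else 0)"
    unfolding assms(4) k_cliques_turan_formula[OF assms(5)] of_nat_sum
    by (intro sum.cong) simp_all
  then show "(1 / real t) * real (k_cliques (t - 1) (turan_V \<Delta>) (turan_E \<Delta> (\<omega> - 1)))
           = (1 / real t) * (\<Sum>k = 0..b. if k \<le> t - 1 then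
                 real (b choose k) * real ((\<omega> - 1 - b) choose (t - 1 - k))
                 * real (a + 1) ^ k * real a ^ (t - 1 - k)
               else 0)"
    by simp
qed

end
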